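(* Let $G$ be a quadrangulation of a disk $\Sigma$ with boundary cycle $B$, and let $\psi$ be a $3$-coloring of $B$ with winding number $\omega_\psi(B)=0$. Then $\psi$ extends to a $3$-coloring of $G$ if and only if every spoke $P$ and each base $Q$ of $P$ satisfy $|P|\ge|\delta_\psi(Q)|$.
   Context: Graphs may have parallel edges but no loops; colorings are proper with colors $\{1,2,3\}$. A quadrangulation of a disk is an embedded graph whose faces are all homeomorphic to open disks, bounded by cycles, and of length $4$; the boundary of the disk is a cycle $B$ of $G$. For a coloring $\psi$ and edge $uv$, $\delta_\psi(u,v)=1$ if $\psi(v)-\psi(u)\in\{1,-2\}$ and $-1$ otherwise; for a walk $W=u_1\ldots u_m$, $\delta_\psi(W)=\sum_{i=1}^{m-1}\delta_\psi(u_i,u_{i+1})$; for a closed walk $Q$, $\omega_\psi(Q)=\delta_\psi(Q)/3$. A spoke is a path $P$ in $G$ that intersects the boundary of the disk exactly in its two endpoints. A base of a spoke $P$ is a subpath $Q$ of $B$ with the same endpoints as $P$ (in a disk, each of the two subpaths of $B$ between the endpoints is a base). $|P|$ denotes the number of edges of $P$. *)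

theory Defs
  imports Complex_Main
begin

text \<open>A graph with parallel edges but no loops
  is given by a finite set of darts D, a tail map tail, the dart reversal rv (fixed-point free
  involution, each edge = pair of opposite darts) and a rotation sc (cyclic order of the
  darts around their common tail). Faces are the orbits of the face permutation
  sc o rv. A connected map with V - E + F = 2 is a cellular embedding in the sphere.\<close>

definition orb :: "('d \<Rightarrow> 'd) \<Rightarrow> 'd \<Rightarrow> 'd set" where
  "orb f d = {(f ^^ n) d | n. True}"

definition face_succ :: "('d \<Rightarrow> 'd) \<Rightarrow> ('d \<Rightarrow> 'd) \<Rightarrow> 'd \<Rightarrow> 'd" where
  "face_succ rv sc d = sc (rv d)"

definition map_connected :: "'d set \<Rightarrow> ('d \<Rightarrow> 'd) \<Rightarrow> ('d \<Rightarrow> 'd) \<Rightarrow> bool" where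
  "map_connected D rv sc \<longleftrightarrow>
     (\<forall>d\<in>D. \<forall>d'\<in>D. (d, d') \<in> ({(x, sc x) | x. x \<in> D} \<union> {(x, rv x) | x. x \<in> D})\<^sup>*)"

definition verts :: "'d set \<Rightarrow> ('d \<Rightarrow> 'v) \<Rightarrow> 'v set" where
  "verts D tail = tail ` D"

definition outer_face :: "('d \<Rightarrow> 'd) \<Rightarrow> ('d \<Rightarrow> 'd) \<Rightarrow> 'd \<Rightarrow> 'd set" where
  "outer_face rv sc d0 = orb (face_succ rv sc) d0"

definition bverts :: "('d \<Rightarrow> 'v) \<Rightarrow> ('d \<Rightarrow> 'd) \<Rightarrow> ('d \<Rightarrow> 'd) \<Rightarrow> 'd \<Rightarrow> 'v set" where
  "bverts tail rv sc d0 = tail ` outer_face rv sc d0"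

definition bvert :: "('d \<Rightarrow> 'v) \<Rightarrow> ('d \<Rightarrow> 'd) \<Rightarrow> ('d \<Rightarrow> 'd) \<Rightarrow> 'd \<Rightarrow> nat \<Rightarrow> 'v" where
  "bvert tail rv sc d0 i =
     tail ((face_succ rv sc ^^ (i mod card (outer_face rv sc d0))) d0)"

definition bwalk :: "('d \<Rightarrow> 'v) \<Rightarrow> ('d \<Rightarrow> 'd) \<Rightarrow> ('d \<Rightarrow> 'd) \<Rightarrow> 'd \<Rightarrow> 'v list" where
  "bwalk tail rv sc d0 = map (bvert tail rv sc d0) [0..<card (outer_face rv sc d0) + 1]"

text \<open>Quadrangulation of a disk: the map is a connected genus-0 map (sphere); the face
  containing dart d0 is the complement of the disk and is bounded by the cycle B; every
  other face (i.e. every face of the disk) is bounded by a cycle of length 4.\<close>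
definition disk_quadrangulation ::
  "'d set \<Rightarrow> ('d \<Rightarrow> 'v) \<Rightarrow> ('d \<Rightarrow> 'd) \<Rightarrow> ('d \<Rightarrow> 'd) \<Rightarrow> 'd \<Rightarrow> bool" where
  "disk_quadrangulation D tail rv sc d0 \<longleftrightarrow>
     finite D \<and> d0 \<in> D \<and>
     (\<forall>d\<in>D. rv d \<in> D \<and> rv (rv d) = d \<and> rv d \<noteq> d \<and> tail (rv d) \<noteq> tail d) \<and>
     bij_betw sc D D \<and>
     (\<forall>d\<in>D. orb sc d = {d'\<in>D. tail d' = tail d}) \<and>
     map_connected D rv sc \<and>
     int (card (verts D tail)) - int (card D div 2)
       + int (card {orb (face_succ rv sc) d | d. d \<in> D}) = 2 \<and>
     inj_on tail (outer_face rv sc d0) \<and>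
     (\<forall>d\<in>outer_face rv sc d0. rv d \<notin> outer_face rv sc d0) \<and>
     (\<forall>d\<in>D. d \<notin> outer_face rv sc d0 \<longrightarrow>
        card (orb (face_succ rv sc) d) = 4 \<and> inj_on tail (orb (face_succ rv sc) d))"

definition coloring :: "'d set \<Rightarrow> ('d \<Rightarrow> 'v) \<Rightarrow> ('d \<Rightarrow> 'd) \<Rightarrow> ('v \<Rightarrow> int) \<Rightarrow> bool" where
  "coloring D tail rv c \<longleftrightarrow>
     (\<forall>v\<in>verts D tail. c v \<in> {1, 2, 3}) \<and> (\<forall>d\<in>D. c (tail d) \<noteq> c (tail (rv d)))"

text \<open>A 3-coloring of the subgraph B (chords of B are not edges of B).\<close>
definition bcoloring :: "('d \<Rightarrow> 'v) \<Rightarrow> ('d \<Rightarrow> 'd) \<Rightarrow> ('d \<Rightarrow> 'd) \<Rightarrow> 'd \<Rightarrow> ('v \<Rightarrow> int) \<Rightarrow> bool" where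
  "bcoloring tail rv sc d0 c \<longleftrightarrow>
     (\<forall>v\<in>bverts tail rv sc d0. c v \<in> {1, 2, 3}) \<and>
     (\<forall>d\<in>outer_face rv sc d0. c (tail d) \<noteq> c (tail (rv d)))"

definition dlt :: "('v \<Rightarrow> int) \<Rightarrow> 'v \<Rightarrow> 'v \<Rightarrow> int" where
  "dlt c u v = (if c v - c u \<in> {1, -2} then 1 else -1)"

definition delta :: "('v \<Rightarrow> int) \<Rightarrow> 'v list \<Rightarrow> int" where
  "delta c W = sum_list (map (\<lambda>(u, v). dlt c u v) (zip W (List.tl W)))"

definition winding :: "('v \<Rightarrow> int) \<Rightarrow> 'v list \<Rightarrow> real" where
  "winding c Q = real_of_int (delta c Q) / 3"

definition dpath_verts :: "('d \<Rightarrow> 'v) \<Rightarrow> ('d \<Rightarrow> 'd) \<Rightarrow> 'd list \<Rightarrow> 'v list" where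
  "dpath_verts tail rv ps = map tail ps @ [tail (rv (last ps))]"

definition is_path :: "'d set \<Rightarrow> ('d \<Rightarrow> 'v) \<Rightarrow> ('d \<Rightarrow> 'd) \<Rightarrow> 'd list \<Rightarrow> bool" where
  "is_path D tail rv ps \<longleftrightarrow> ps \<noteq> [] \<and> set ps \<subseteq> D \<and>
     (\<forall>i. Suc i < length ps \<longrightarrow> tail (rv (ps ! i)) = tail (ps ! Suc i)) \<and>
     distinct (dpath_verts tail rv ps)"

definition spoke :: "'d set \<Rightarrow> ('d \<Rightarrow> 'v) \<Rightarrow> ('d \<Rightarrow> 'd) \<Rightarrow> ('d \<Rightarrow> 'd) \<Rightarrow> 'd \<Rightarrow> 'd list \<Rightarrow> bool" where
  "spoke D tail rv sc d0 ps \<longleftrightarrow> is_path D tail rv ps \<and>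
     (let W = dpath_verts tail rv ps in
        hd W \<in> bverts tail rv sc d0 \<and> last W \<in> bverts tail rv sc d0 \<and>
        (\<forall>v\<in>set (butlast (List.tl W)). v \<notin> bverts tail rv sc d0)) \<and>
     (\<forall>d\<in>set ps. d \<notin> outer_face rv sc d0 \<and> rv d \<notin> outer_face rv sc d0)"

definition base :: "('d \<Rightarrow> 'v) \<Rightarrow> ('d \<Rightarrow> 'd) \<Rightarrow> ('d \<Rightarrow> 'd) \<Rightarrow> 'd \<Rightarrow> 'd list \<Rightarrow> 'v list \<Rightarrow> bool" where
  "base tail rv sc d0 ps Q \<longleftrightarrow>
     (\<exists>i m. i < card (outer_face rv sc d0) \<and> m < card (outer_face rv sc d0) \<and>
        (Q = map (\<lambda>t. bvert tail rv sc d0 (i + t)) [0..<m + 1] \<or>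
         Q = rev (map (\<lambda>t. bvert tail rv sc d0 (i + t)) [0..<m + 1]))) \<and>
     hd Q = hd (dpath_verts tail rv ps) \<and> last Q = last (dpath_verts tail rv ps)"

end

theory Submission
  imports Defs "HOL-Library.Function_Algebras" "HOL-Library.Z2" "HOL-Library.Indicator_Function"
begin

text \<open>A colouring \<open>\<phi>\<close> assigns to each dart the value \<open>\<delta>\<^sub>\<phi> = \<plusminus>1\<close>. Around a face of
  length 4 these values sum to 0 (the sum is divisible by 3, even, and at most 4 in absolute
  value), and around B they sum to 0 by the winding hypothesis. So \<open>\<delta>\<^sub>\<phi>\<close> is a cocycle on
  the sphere, and since the first cohomology of the sphere vanishes (a dimension count against
  Euler's formula) it is the coboundary of a potential \<open>g\<close>. Hence \<open>\<delta>\<^sub>\<psi>(Q) = \<delta>\<^sub>\<phi>(Q)\<close> is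
  the difference of \<open>g\<close> between the ends of the spoke \<open>P\<close>, which is at most \<open>|P|\<close>.

  Conversely, the partial sums of \<open>\<delta>\<^sub>\<psi>\<close> along B give heights on B, and
  \<open>h v = min\<^sub>b (h b + dist b v)\<close> extends them. Splitting a walk between boundary vertices at
  its visits to B, the spoke condition shows that the boundary heights are 1-Lipschitz for the
  graph distance, so \<open>h\<close> agrees with them on B. The graph is bipartite (vanishing cohomology
  over the two-element field, as all faces have even length), so \<open>h\<close> changes by exactly 1
  along every edge, and \<open>h\<close> plus a constant, taken modulo 3, is the required colouring.\<close>

section \<open>Orbits of an injective self-map of a finite set\<close>

locale finite_self_map =
  fixes p :: "'d \<Rightarrow> 'd" and D :: "'d set"
  assumes finite_carrier: "finite D" and inj: "inj_on p D" and maps_into: "\<And>x. x \<in> D \<Longrightarrow> p x \<in> D"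
begin

lemma funpow_in: "d \<in> D \<Longrightarrow> (p ^^ n) d \<in> D"
  by (induction n) (auto intro: maps_into)

lemma funpow_cancel: "d \<in> D \<Longrightarrow> e \<in> D \<Longrightarrow> (p ^^ n) d = (p ^^ n) e \<Longrightarrow> d = e"
proof (induction n arbitrary: d e)
  case (Suc n)
  then have "p ((p ^^ n) d) = p ((p ^^ n) e)" by (simp add: funpow_swap1)
  then have "(p ^^ n) d = (p ^^ n) e" using inj funpow_in Suc.prems by (meson inj_on_eq_iff)
  then show ?case using Suc by blast
qed simp

lemma funpow_diff_fixed:
  assumes "d \<in> D" "i < j" "(p ^^ i) d = (p ^^ j) d"
  shows "(p ^^ (j - i)) d = d"
proof -
  have "(p ^^ i) ((p ^^ (j - i)) d) = (p ^^ (i + (j - i))) d" by (simp only: funpow_add o_apply)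
  also have "\<dots> = (p ^^ i) d" using assms by simp
  finally show ?thesis using funpow_cancel funpow_in assms(1) by blast
qed

lemma periodic: assumes "d \<in> D" shows "\<exists>n>0. (p ^^ n) d = d"
proof -
  have "\<not> inj_on (\<lambda>i. (p ^^ i) d) {..card D}"
  proof
    assume "inj_on (\<lambda>i. (p ^^ i) d) {..card D}"
    then have "card ((\<lambda>i. (p ^^ i) d) ` {..card D}) = Suc (card D)" by (simp add: card_image)
    moreover have "(\<lambda>i. (p ^^ i) d) ` {..card D} \<subseteq> D" using funpow_in assms by auto
    ultimately show False using card_mono[OF finite_carrier, of "(\<lambda>i. (p ^^ i) d) ` {..card D}"] by simp
  qed
  then obtain i j where "i < j" "(p ^^ i) d = (p ^^ j) d"
    unfolding inj_on_def by (metis linorder_neqE_nat)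
  then show ?thesis using funpow_diff_fixed[OF assms] by (intro exI[of _ "j - i"]) auto
qed

definition period :: "'d \<Rightarrow> nat" where
  "period d = (LEAST n. n > 0 \<and> (p ^^ n) d = d)"

lemma period_pos: "d \<in> D \<Longrightarrow> period d > 0"
  and funpow_period: "d \<in> D \<Longrightarrow> (p ^^ period d) d = d"
  using LeastI_ex[OF periodic] unfolding period_def by auto

lemma funpow_less_period: "d \<in> D \<Longrightarrow> 0 < m \<Longrightarrow> m < period d \<Longrightarrow> (p ^^ m) d \<noteq> d"
  using not_less_Least unfolding period_def by blast

lemma funpow_mod_period: assumes "d \<in> D" shows "(p ^^ n) d = (p ^^ (n mod period d)) d"
proof -
  have multiple: "(p ^^ (period d * q)) d = d" for q
    by (induction q) (simp_all add: funpow_add funpow_period[OF assms])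
  have "(p ^^ n) d = (p ^^ (n mod period d + period d * (n div period d))) d" by simp
  also have "\<dots> = (p ^^ (n mod period d)) ((p ^^ (period d * (n div period d))) d)"
    by (simp only: funpow_add o_apply)
  finally show ?thesis using multiple by simp
qed

lemma orb_eq_image_period: assumes "d \<in> D" shows "orb p d = (\<lambda>i. (p ^^ i) d) ` {..<period d}"
proof
  show "orb p d \<subseteq> (\<lambda>i. (p ^^ i) d) ` {..<period d}"
  proof
    fix x assume "x \<in> orb p d"
    then obtain n where "x = (p ^^ n) d" unfolding orb_def by auto
    then have "x = (p ^^ (n mod period d)) d" using funpow_mod_period[OF assms] by simp
    moreover have "n mod period d < period d" using period_pos[OF assms] by simp
    ultimately show "x \<in> (\<lambda>i. (p ^^ i) d) ` {..<period d}" by blast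
  qed
qed (auto simp: orb_def)

lemma inj_on_funpow_period: assumes "d \<in> D" shows "inj_on (\<lambda>i. (p ^^ i) d) {..<period d}"
proof -
  have False if "i < j" "j < period d" "(p ^^ i) d = (p ^^ j) d" for i j
    using funpow_diff_fixed[OF assms that(1,3)] funpow_less_period[OF assms, of "j - i"] that by auto
  then show ?thesis unfolding inj_on_def by (metis lessThan_iff linorder_neqE_nat)
qed

lemma card_orb: "d \<in> D \<Longrightarrow> card (orb p d) = period d"
  using orb_eq_image_period inj_on_funpow_period by (simp add: card_image)

lemma orb_subset: "d \<in> D \<Longrightarrow> orb p d \<subseteq> D"
  unfolding orb_def using funpow_in by auto

lemma finite_orb: "d \<in> D \<Longrightarrow> finite (orb p d)"
  using orb_subset finite_carrier finite_subset by blast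

lemma self_in_orb: "d \<in> orb p d"
  unfolding orb_def by (auto intro: exI[of _ 0])

lemma funpow_in_orb: "(p ^^ n) d \<in> orb p d"
  unfolding orb_def by auto

lemma map_in_orb: "x \<in> orb p d \<Longrightarrow> p x \<in> orb p d"
  unfolding orb_def by (auto intro: exI[of _ "Suc _"])

lemma orb_mono: "x \<in> orb p d \<Longrightarrow> orb p x \<subseteq> orb p d"
  unfolding orb_def by (auto simp flip: funpow_add[unfolded o_def, THEN fun_cong] intro: exI)

lemma orb_sym: assumes "d \<in> D" "x \<in> orb p d" shows "d \<in> orb p x"
proof -
  obtain n where x: "x = (p ^^ n) d" using assms(2) unfolding orb_def by auto
  define m where "m = period d - n mod period d"
  have "(m + n) mod period d = (m + n mod period d) mod period d" by (simp add: mod_add_right_eq)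
  also have "m + n mod period d = period d" using period_pos[OF assms(1)] by (simp add: m_def)
  finally have "(m + n) mod period d = 0" by simp
  then have "(p ^^ m) x = d"
    using funpow_mod_period[OF assms(1), of "m + n"] by (simp add: x funpow_add)
  then show ?thesis unfolding orb_def by blast
qed

lemma orb_eq_of_mem: "d \<in> D \<Longrightarrow> x \<in> orb p d \<Longrightarrow> orb p x = orb p d"
  using orb_mono orb_sym by (meson subset_antisym)

lemma orb_eq_of_meet: "d \<in> D \<Longrightarrow> e \<in> D \<Longrightarrow> orb p d \<inter> orb p e \<noteq> {} \<Longrightarrow> orb p d = orb p e"
  using orb_eq_of_mem by blast

lemma sum_orb_shift: assumes "d \<in> D" shows "(\<Sum>x\<in>orb p d. g (p x)) = (\<Sum>x\<in>orb p d. g x)"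
proof -
  have "p ` orb p d \<subseteq> orb p d" using map_in_orb by auto
  moreover have inj_orb: "inj_on p (orb p d)" using inj orb_subset[OF assms] inj_on_subset by blast
  ultimately have "p ` orb p d = orb p d"
    using card_subset_eq[OF finite_orb[OF assms]] card_image by metis
  then show ?thesis using sum.reindex[OF inj_orb, of g] by simp
qed

end

section \<open>Linear independence in function spaces\<close>

abbreviation fun_scale :: "'a::field \<Rightarrow> ('x \<Rightarrow> 'a) \<Rightarrow> ('x \<Rightarrow> 'a)" where
  "fun_scale c f \<equiv> (\<lambda>x. c * f x)"

global_interpretation fun_space: vector_space "fun_scale :: 'a::field \<Rightarrow> ('x \<Rightarrow> 'a) \<Rightarrow> ('x \<Rightarrow> 'a)"
  by unfold_locales (auto simp: fun_eq_iff algebra_simps)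

lemma sum_fun_apply: "(\<Sum>a\<in>A. f a) x = (\<Sum>a\<in>A. f a x)"
  by (induction A rule: infinite_finite_induct) auto

lemma independent_of_private_points:
  fixes X :: "('x \<Rightarrow> 'a::field) set"
  assumes "\<And>f. f \<in> X \<Longrightarrow> \<exists>x. f x \<noteq> 0 \<and> (\<forall>h\<in>X. h x \<noteq> 0 \<longrightarrow> h = f)"
  shows "fun_space.independent X"
  unfolding fun_space.independent_explicit_module
proof (intro allI impI)
  fix t u f assume t: "finite t" "t \<subseteq> X" "(\<Sum>v\<in>t. fun_scale (u v) v) = 0" "f \<in> t"
  obtain x where x: "f x \<noteq> 0" "\<forall>h\<in>X. h x \<noteq> 0 \<longrightarrow> h = f" using assms t(2,4) by blast
  have "0 = (\<Sum>v\<in>t. u v * v x)" using t(3) by (simp add: sum_fun_apply fun_eq_iff)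
  also have "\<dots> = (\<Sum>v\<in>t. if v = f then u v * v x else 0)"
    using x t(2) by (intro sum.cong) auto
  also have "\<dots> = u f * f x" using t(1,4) by simp
  finally show "u f = 0" using x(1) by simp
qed

lemma independent_Un_kernel:
  fixes L :: "('x \<Rightarrow> 'a::field) \<Rightarrow> ('x \<Rightarrow> 'a)"
  assumes lin: "Vector_Spaces.linear fun_scale fun_scale L"
    and X: "fun_space.independent X" "\<forall>x\<in>X. L x = 0"
    and S: "inj_on L S" "fun_space.independent (L ` S)"
  shows "fun_space.independent (X \<union> S) \<and> X \<inter> S = {}"
proof -
  interpret L: Vector_Spaces.linear fun_scale fun_scale L by (rule lin)
  have disj: "X \<inter> S = {}"
  proof (rule ccontr)
    assume "X \<inter> S \<noteq> {}"
    then obtain x where "x \<in> S" "L x = 0" using X(2) by blast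
    then have "0 \<in> L ` S" by (metis image_eqI)
    from fun_space.dependent_zero[OF this] S(2) show False by simp
  qed
  have "fun_space.independent (X \<union> S)"
    unfolding fun_space.independent_explicit_module
  proof (intro allI impI)
    fix t u v assume t: "finite t" "t \<subseteq> X \<union> S" "(\<Sum>v\<in>t. fun_scale (u v) v) = 0" "v \<in> t"
    have "L (\<Sum>v\<in>t. fun_scale (u v) v) = 0" using t(3) L.zero by simp
    then have "(\<Sum>v\<in>t. fun_scale (u v) (L v)) = 0" by (simp add: L.sum L.scale)
    moreover have "(\<Sum>v\<in>t - S. fun_scale (u v) (L v)) = 0"
      using t(2) X(2) by (intro sum.neutral) (auto simp: fun_eq_iff)
    ultimately have "(\<Sum>v\<in>t \<inter> S. fun_scale (u v) (L v)) = 0"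
      using sum.Int_Diff[OF t(1), of "\<lambda>v. fun_scale (u v) (L v)" S] by simp
    moreover have injt: "inj_on L (t \<inter> S)" using S(1) inj_on_subset by blast
    define w where "w y = u (the_inv_into (t \<inter> S) L y)" for y
    ultimately have "(\<Sum>y\<in>L ` (t \<inter> S). fun_scale (w y) y) = 0"
      using injt by (simp add: sum.reindex the_inv_into_f_f w_def)
    then have "w (L v) = 0" if "v \<in> t \<inter> S" for v
      using fun_space.independentD[OF S(2)] t(1) that by blast
    then have uS: "u v = 0" if "v \<in> t \<inter> S" for v
      using that injt by (simp add: w_def the_inv_into_f_f)
    then have "(\<Sum>v\<in>t \<inter> S. fun_scale (u v) v) = 0" by (intro sum.neutral) (auto simp: fun_eq_iff)
    then have "(\<Sum>v\<in>t - S. fun_scale (u v) v) = 0"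
      using sum.Int_Diff[OF t(1), of "\<lambda>v. fun_scale (u v) v" S] t(3) by simp
    then have "u v = 0" if "v \<in> t - S" for v
      using fun_space.independentD[OF X(1), of "t - S" u v] t that by blast
    then show "u v = 0" using uS t(4) by blast
  qed
  then show ?thesis using disj by blast
qed

section \<open>Vanishing of the first cohomology of a spherical map\<close>

locale spherical_map =
  fixes D :: "'d set" and tail :: "'d \<Rightarrow> 'v" and rv sc :: "'d \<Rightarrow> 'd"
  assumes finite_darts: "finite D"
    and rv_in: "\<And>d. d \<in> D \<Longrightarrow> rv d \<in> D" and rv_rv: "\<And>d. d \<in> D \<Longrightarrow> rv (rv d) = d"
    and rv_neq: "\<And>d. d \<in> D \<Longrightarrow> rv d \<noteq> d"
    and sc_bij: "bij_betw sc D D"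
    and orb_sc: "\<And>d. d \<in> D \<Longrightarrow> orb sc d = {d'\<in>D. tail d' = tail d}"
    and connected: "map_connected D rv sc"
    and euler: "int (card (verts D tail)) - int (card D div 2)
       + int (card {orb (face_succ rv sc) d | d. d \<in> D}) = 2"
begin

abbreviation "fs \<equiv> face_succ rv sc"

abbreviation "faces \<equiv> {orb fs d | d. d \<in> D}"

lemma sc_in: "d \<in> D \<Longrightarrow> sc d \<in> D" using sc_bij bij_betwE by blast

lemma fs_in: "d \<in> D \<Longrightarrow> fs d \<in> D" unfolding face_succ_def using sc_in rv_in by blast

lemma tail_sc: assumes "d \<in> D" shows "tail (sc d) = tail d"
proof -
  have "sc d \<in> orb sc d" unfolding orb_def by (auto intro: exI[of _ 1])
  then show ?thesis using orb_sc assms by blast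
qed

lemma tail_fs: "d \<in> D \<Longrightarrow> tail (fs d) = tail (rv d)"
  unfolding face_succ_def using tail_sc rv_in by blast

lemma inj_on_fs: "inj_on fs D"
proof
  fix x y assume xy: "x \<in> D" "y \<in> D" "fs x = fs y"
  then have "rv x = rv y" using sc_bij rv_in unfolding bij_betw_def inj_on_def face_succ_def by blast
  then show "x = y" using rv_rv xy by metis
qed

sublocale F: finite_self_map fs D
  by unfold_locales (auto simp: finite_darts inj_on_fs fs_in)

lemma darts_nonempty: "D \<noteq> {}"
  using euler by (auto simp: verts_def)

lemma connected_rtrancl: "d \<in> D \<Longrightarrow> d' \<in> D \<Longrightarrow>
   (d, d') \<in> ({(x, sc x) | x. x \<in> D} \<union> {(x, rv x) | x. x \<in> D})\<^sup>*"
  using connected unfolding map_connected_def by blast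

definition cochains :: "('d \<Rightarrow> 'a::field) set" where
  "cochains = {f. (\<forall>x. x \<notin> D \<longrightarrow> f x = 0) \<and> (\<forall>d\<in>D. f (rv d) = - f d)}"

definition face_sum :: "('d \<Rightarrow> 'a::field) \<Rightarrow> ('d \<Rightarrow> 'a)" where
  "face_sum f = (\<lambda>d. if d \<in> D then \<Sum>x\<in>orb fs d. f x else 0)"

definition coboundary :: "('v \<Rightarrow> 'a::field) \<Rightarrow> ('d \<Rightarrow> 'a)" where
  "coboundary g = (\<lambda>d. if d \<in> D then g (tail (rv d)) - g (tail d) else 0)"

lemma linear_face_sum: "Vector_Spaces.linear fun_scale fun_scale (face_sum :: ('d \<Rightarrow> 'a::field) \<Rightarrow> _)"
  unfolding Vector_Spaces.linear_iff
  by (auto simp: fun_space.vector_space_axioms face_sum_def fun_eq_iff sum.distrib sum_distrib_left)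

lemma linear_coboundary: "Vector_Spaces.linear fun_scale fun_scale (coboundary :: ('v \<Rightarrow> 'a::field) \<Rightarrow> _)"
  unfolding Vector_Spaces.linear_iff
  by (auto simp: fun_space.vector_space_axioms coboundary_def fun_eq_iff algebra_simps)

lemma face_sum_add: "face_sum (f + h) = face_sum f + face_sum h"
  by (simp add: face_sum_def fun_eq_iff sum.distrib)

lemma face_sum_diff: "face_sum (f - h) = face_sum f - face_sum h"
  by (simp add: face_sum_def fun_eq_iff sum_subtractf)

lemma face_sum_indicator:
  assumes "y \<in> D" shows "face_sum (indicator {y}) = (indicator (orb fs y) :: 'd \<Rightarrow> 'a::field)"
proof
  fix d
  show "face_sum (indicator {y}) d = (indicator (orb fs y) :: 'd \<Rightarrow> 'a) d"
  proof (cases "d \<in> D")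
    case True
    then have "face_sum (indicator {y}) d = (indicator (orb fs d) y :: 'a)"
      using F.finite_orb[OF True] by (simp add: face_sum_def indicator_def of_bool_def sum.delta')
    also have "\<dots> = indicator (orb fs y) d"
      using F.orb_sym True assms by (auto simp: indicator_def)
    finally show ?thesis .
  qed (use F.orb_subset[OF assms] in \<open>auto simp: face_sum_def indicator_def\<close>)
qed

lemma face_sum_coboundary: "face_sum (coboundary g) = (0 :: 'd \<Rightarrow> 'a::field)"
proof
  fix d
  show "face_sum (coboundary g) d = (0 :: 'd \<Rightarrow> 'a) d"
  proof (cases "d \<in> D")
    case True
    have "face_sum (coboundary g) d = (\<Sum>x\<in>orb fs d. g (tail (fs x)) - g (tail x))"
      using True F.orb_subset[OF True] tail_fs by (auto simp: face_sum_def coboundary_def intro!: sum.cong)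
    also have "\<dots> = (\<Sum>x\<in>orb fs d. g (tail (fs x))) - (\<Sum>x\<in>orb fs d. g (tail x))"
      by (simp add: sum_subtractf)
    finally show ?thesis using F.sum_orb_shift[OF True, of "\<lambda>x. g (tail x)"] by simp
  qed (simp add: face_sum_def)
qed

lemma coboundary_in_cochains: "coboundary g \<in> cochains"
  unfolding cochains_def coboundary_def using rv_in rv_rv by auto

lemma dart_cochain_in_cochains:
  assumes "y \<in> D" shows "indicator {y} - indicator {rv y} \<in> (cochains :: ('d \<Rightarrow> 'a::field) set)"
  using assms rv_in rv_rv rv_neq unfolding cochains_def indicator_def by (auto, metis+)

text \<open>Crossing from the face of \<open>y\<close> to the face of \<open>rv y\<close> adds the boundary of a
  single edge; connectivity lets us reach every face this way.\<close>
lemma face_difference_is_boundary: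
  assumes "dd \<in> D" "x \<in> D"
  shows "\<exists>a\<in>cochains. face_sum a = indicator (orb fs x) - (indicator (orb fs dd) :: 'd \<Rightarrow> 'a::field)"
proof -
  have "(dd, x) \<in> ({(x, sc x) | x. x \<in> D} \<union> {(x, rv x) | x. x \<in> D})\<^sup>*"
    using connected_rtrancl assms by blast
  then have "x \<in> D \<and> (\<exists>a\<in>cochains. face_sum a = indicator (orb fs x) - (indicator (orb fs dd) :: 'd \<Rightarrow> 'a))"
  proof (induction rule: rtrancl_induct)
    case base
    have "(0::'d \<Rightarrow> 'a) \<in> cochains" by (simp add: cochains_def)
    moreover have "face_sum (0::'d \<Rightarrow> 'a) = 0" by (simp add: face_sum_def fun_eq_iff)
    ultimately show ?case using assms(1) by (metis diff_self)
  next
    case (step y z)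
    then obtain a where y: "y \<in> D" and a: "a \<in> cochains"
      "face_sum a = indicator (orb fs y) - (indicator (orb fs dd) :: 'd \<Rightarrow> 'a)" by blast
    let ?a = "a + (indicator {rv y} - indicator {rv (rv y)})"
    have "?a \<in> cochains" using a(1) dart_cochain_in_cochains[OF rv_in[OF y]]
      by (auto simp: cochains_def)
    moreover have "face_sum ?a = indicator (orb fs (rv y)) - indicator (orb fs dd)"
      using a(2) rv_in[OF y] rv_rv[OF y] y
      by (simp add: face_sum_add face_sum_diff face_sum_indicator)
    ultimately have rv_case: "\<exists>a\<in>cochains. face_sum a = indicator (orb fs (rv y)) - (indicator (orb fs dd) :: 'd \<Rightarrow> 'a)"
      by blast
    have "sc y \<in> orb fs (rv y)"
      using F.map_in_orb[OF F.self_in_orb, of "rv y"] rv_rv[OF y] by (simp add: face_succ_def)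
    then have "orb fs (sc y) = orb fs (rv y)" using F.orb_eq_of_mem[OF rv_in[OF y]] by blast
    with rv_case step(2) y rv_in sc_in show ?case by (elim UnE CollectE exE conjE Pair_inject) metis+
  qed
  then show ?thesis by blast
qed

lemma coboundary_zero_imp_const:
  assumes "coboundary g = 0" "dd \<in> D" "x \<in> D" shows "g (tail x) = g (tail dd)"
proof -
  have "(dd, x) \<in> ({(x, sc x) | x. x \<in> D} \<union> {(x, rv x) | x. x \<in> D})\<^sup>*"
    using connected_rtrancl assms by blast
  then show ?thesis
  proof (induction rule: rtrancl_induct)
    case (step y z)
    then have "y \<in> D" by auto
    moreover have "coboundary g y = 0" using assms(1) by simp
    ultimately show ?case using step tail_sc by (auto simp: coboundary_def)
  qed simp
qed

text \<open>One dart of each edge.\<close>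
definition half_darts :: "'d set" where "half_darts = {x\<in>D. x = (SOME y. y \<in> {x, rv x})}"

lemma half_darts_choice:
  "x \<in> D \<Longrightarrow> (x \<in> half_darts \<and> rv x \<notin> half_darts) \<or> (x \<notin> half_darts \<and> rv x \<in> half_darts)"
proof -
  assume x: "x \<in> D"
  let ?s = "SOME y. y \<in> {x, rv x}"
  have s: "?s \<in> {x, rv x}" by (rule someI) auto
  have "{rv x, rv (rv x)} = {x, rv x}" using rv_rv x by auto
  then have "(SOME y. y \<in> {rv x, rv (rv x)}) = ?s" by simp
  then show ?thesis using s x rv_in[OF x] rv_neq[OF x] unfolding half_darts_def by auto
qed

lemma half_darts_subset: "half_darts \<subseteq> D" unfolding half_darts_def by auto

lemma finite_half_darts: "finite half_darts"
  using half_darts_subset finite_darts finite_subset by blast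

lemma card_darts: "card D = 2 * card half_darts"
proof -
  have "D = half_darts \<union> rv ` half_darts"
    using half_darts_choice half_darts_subset rv_in rv_rv by (auto, metis image_eqI)
  moreover have "half_darts \<inter> rv ` half_darts = {}" using half_darts_choice half_darts_subset by auto
  moreover have "inj_on rv half_darts" using half_darts_subset rv_rv by (metis inj_on_def subsetD)
  ultimately show ?thesis using finite_half_darts by (metis card_Un_disjoint card_image finite_imageI mult_2)
qed

lemma cochains_span:
  assumes "f \<in> (cochains :: ('d \<Rightarrow> 'a::field) set)"
  shows "f \<in> fun_space.span ((\<lambda>d. indicator {d} - indicator {rv d}) ` half_darts)"
proof -
  have "f = (\<Sum>d\<in>half_darts. fun_scale (f d) (indicator {d} - indicator {rv d}))"
  proof
    fix x
    have "(\<Sum>d\<in>half_darts. fun_scale (f d) (indicator {d} - indicator {rv d})) x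
        = (\<Sum>d\<in>half_darts. (if d = x then f d else 0) - (if x \<in> D \<and> d = rv x then f d else 0))"
      unfolding sum_fun_apply
    proof (rule sum.cong)
      fix d assume "d \<in> half_darts"
      then have "(x = rv d) = (x \<in> D \<and> d = rv x)"
        using half_darts_subset rv_rv[of d] rv_rv[of x] rv_in[of d] by auto
      then show "fun_scale (f d) (indicator {d} - indicator {rv d}) x
          = (if d = x then f d else 0) - (if x \<in> D \<and> d = rv x then f d else 0)"
        by (auto simp: indicator_def)
    qed simp
    also have "\<dots> = (\<Sum>d\<in>half_darts. if d = x then f d else 0)
        - (\<Sum>d\<in>half_darts. if x \<in> D \<and> d = rv x then f d else 0)"
      by (simp add: sum_subtractf)
    also have "\<dots> = (if x \<in> half_darts then f x else 0) - (if x \<in> D \<and> rv x \<in> half_darts then f (rv x) else 0)"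
      using finite_half_darts by (cases "x \<in> D") (simp_all add: sum.delta')
    also have "\<dots> = f x"
      using assms half_darts_choice[of x] half_darts_subset unfolding cochains_def by auto
    finally show "f x = (\<Sum>d\<in>half_darts. fun_scale (f d) (indicator {d} - indicator {rv d})) x" by simp
  qed
  also have "\<dots> \<in> fun_space.span ((\<lambda>d. indicator {d} - indicator {rv d}) ` half_darts)"
    by (intro fun_space.span_sum fun_space.span_scale fun_space.span_base imageI)
  finally show ?thesis .
qed

lemma independent_coboundaries:
  obtains Y :: "('d \<Rightarrow> 'a::field) set"
  where "fun_space.independent Y" "finite Y" "Suc (card Y) = card (verts D tail)" "Y \<subseteq> range coboundary"
proof -
  interpret L: Vector_Spaces.linear "fun_scale :: 'a \<Rightarrow> ('v \<Rightarrow> 'a) \<Rightarrow> _" fun_scale coboundary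
    by (rule linear_coboundary)
  obtain dd where dd: "dd \<in> D" using darts_nonempty by blast
  define v0 where "v0 = tail dd"
  define Vs where "Vs = verts D tail"
  have finV: "finite Vs" unfolding Vs_def verts_def using finite_darts by simp
  have v0V: "v0 \<in> Vs" unfolding Vs_def verts_def v0_def using dd by simp
  define T where "T = (\<lambda>v. indicator {v} :: 'v \<Rightarrow> 'a) ` (Vs - {v0})"
  have T_ind: "fun_space.independent T"
    unfolding T_def by (rule independent_of_private_points) (auto simp: indicator_def)
  have "fun_space.span T \<subseteq> {g. g v0 = 0 \<and> (\<forall>v. v \<notin> Vs \<longrightarrow> g v = 0)}"
    by (rule fun_space.span_minimal) (auto simp: T_def fun_space.subspace_def indicator_def)
  then have spanT: "g v0 = 0" "v \<notin> Vs \<Longrightarrow> g v = 0" if "g \<in> fun_space.span T" for g v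
    using that by auto
  have inj: "inj_on coboundary (fun_space.span T)"
  proof
    fix g h assume g: "g \<in> fun_space.span T" and h: "h \<in> fun_space.span T"
      and "coboundary g = coboundary h"
    then have "coboundary (g - h) = 0" by (simp add: L.diff)
    then have c: "(g - h) (tail x) = (g - h) v0" if "x \<in> D" for x
      using coboundary_zero_imp_const dd that unfolding v0_def by blast
    show "g = h"
    proof
      fix v show "g v = h v"
        using c spanT[OF g] spanT[OF h] unfolding Vs_def verts_def by (cases "v \<in> tail ` D") auto
    qed
  qed
  show ?thesis
  proof
    show "fun_space.independent (coboundary ` T)" by (rule L.independent_injective_image[OF T_ind inj])
    show "finite (coboundary ` T)" unfolding T_def using finV by simp
    have "card (coboundary ` T) = card T"
      using inj fun_space.span_superset inj_on_subset by (metis card_image)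
    also have "card T = card (Vs - {v0})"
      unfolding T_def by (rule card_image) (auto simp: inj_on_def dest: fun_cong[of _ _ v0]
        intro: indicator_eq_1_iff[THEN iffD1, THEN singletonD] ; metis indicator_eq_1_iff singletonD singletonI)
    moreover have "card Vs > 0" using v0V finV card_gt_0_iff by blast
    ultimately show "Suc (card (coboundary ` T)) = card (verts D tail)"
      using v0V finV unfolding Vs_def by simp
  qed auto
qed

lemma independent_face_differences:
  assumes dd: "dd \<in> D"
  shows "fun_space.independent
    ((\<lambda>Fc. indicator Fc - indicator (orb fs dd) :: 'd \<Rightarrow> 'a::field) ` (faces - {orb fs dd}))"
proof (rule independent_of_private_points)
  let ?bd = "\<lambda>Fc. indicator Fc - indicator (orb fs dd) :: 'd \<Rightarrow> 'a"
  fix f assume "f \<in> ?bd ` (faces - {orb fs dd})"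
  then obtain x where x: "x \<in> D" "orb fs x \<noteq> orb fs dd" "f = ?bd (orb fs x)" by blast
  have x_dd: "x \<notin> orb fs dd"
    using F.orb_eq_of_meet[OF x(1) dd] F.self_in_orb x(2) by blast
  show "\<exists>y. f y \<noteq> 0 \<and> (\<forall>h\<in>?bd ` (faces - {orb fs dd}). h y \<noteq> 0 \<longrightarrow> h = f)"
  proof (intro exI conjI ballI impI)
    show "f x \<noteq> 0" using x(3) x_dd F.self_in_orb by (simp add: indicator_def)
    fix h assume "h \<in> ?bd ` (faces - {orb fs dd})" "h x \<noteq> 0"
    then obtain d where d: "d \<in> D" "h = ?bd (orb fs d)" "h x \<noteq> 0" by blast
    then have "x \<in> orb fs d" using x_dd by (simp add: indicator_def)
    then have "orb fs x = orb fs d" using F.orb_eq_of_meet[OF x(1) d(1)] F.self_in_orb by blast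
    then show "h = f" using x(3) d(2) by simp
  qed
qed

lemma independent_face_boundaries:
  obtains S :: "('d \<Rightarrow> 'a::field) set"
  where "S \<subseteq> cochains" "finite S" "Suc (card S) = card faces" "inj_on face_sum S"
    "fun_space.independent (face_sum ` S)"
proof -
  obtain dd where dd: "dd \<in> D" using darts_nonempty by blast
  define F0 where "F0 = orb fs dd"
  have finF: "finite faces" using finite_darts by (simp add: setcompr_eq_image)
  have F0F: "F0 \<in> faces" unfolding F0_def using dd by blast
  define bd where "bd Fc = (indicator Fc - indicator F0 :: 'd \<Rightarrow> 'a)" for Fc
  define s where "s Fc = (SOME a. a \<in> cochains \<and> face_sum a = bd Fc)" for Fc
  have s: "s Fc \<in> cochains \<and> face_sum (s Fc) = bd Fc" if Fc: "Fc \<in> faces" for Fc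
  proof -
    obtain x where "x \<in> D" "Fc = orb fs x" using Fc by blast
    then have "\<exists>a. a \<in> cochains \<and> face_sum a = bd Fc"
      using face_difference_is_boundary[OF dd] unfolding bd_def F0_def by blast
    then show ?thesis unfolding s_def by (rule someI_ex)
  qed
  have inj_bd: "inj_on bd (faces - {F0})"
  proof
    fix F1 F2 assume "bd F1 = bd F2"
    then have "indicator F1 = (indicator F2 :: 'd \<Rightarrow> 'a)" by (simp add: bd_def)
    then show "F1 = F2" by (metis indicator_eq_1_iff zero_neq_one set_eqI)
  qed
  have inj_s: "inj_on s (faces - {F0})"
  proof
    fix F1 F2 assume F: "F1 \<in> faces - {F0}" "F2 \<in> faces - {F0}" "s F1 = s F2"
    then have "bd F1 = bd F2" using s[of F1] s[of F2] by simp
    then show "F1 = F2" using inj_onD[OF inj_bd _ F(1,2)] by blast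
  qed
  define S where "S = s ` (faces - {F0})"
  have face_sum_S: "face_sum ` S = bd ` (faces - {F0})"
    unfolding S_def image_image using s by (intro image_cong) auto
  show ?thesis
  proof
    show "S \<subseteq> cochains" unfolding S_def using s by blast
    show "finite S" unfolding S_def using finF by simp
    show "Suc (card S) = card faces"
    proof -
      have "card faces > 0" using F0F finF card_gt_0_iff by blast
      then show ?thesis unfolding S_def using card_image[OF inj_s] F0F finF by simp
    qed
    show "inj_on face_sum S"
    proof
      fix a b assume "a \<in> S" "b \<in> S" "face_sum a = face_sum b"
      then obtain F1 F2 where F: "F1 \<in> faces - {F0}" "F2 \<in> faces - {F0}" "a = s F1" "b = s F2"
        and "face_sum (s F1) = face_sum (s F2)" unfolding S_def by blast
      then have "bd F1 = bd F2" using s[of F1] s[of F2] by simp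
      then show "a = b" using inj_onD[OF inj_bd _ F(1,2)] F(3,4) by blast
    qed
    show "fun_space.independent (face_sum ` S)"
      unfolding face_sum_S bd_def F0_def using independent_face_differences[OF dd] .
  qed
qed

lemma card_independent_cochains:
  assumes "fun_space.independent X" "X \<subseteq> (cochains :: ('d \<Rightarrow> 'a::field) set)"
  shows "finite X" "2 * card X \<le> card D"
proof -
  let ?E = "(\<lambda>d. indicator {d} - indicator {rv d}) ` half_darts :: ('d \<Rightarrow> 'a) set"
  have "X \<subseteq> fun_space.span ?E" using assms(2) cochains_span by blast
  from fun_space.independent_span_bound[OF finite_imageI[OF finite_half_darts] assms(1) this]
  have "finite X" "card X \<le> card ?E" by auto
  moreover have "card ?E \<le> card half_darts" by (rule card_image_le[OF finite_half_darts])
  ultimately show "finite X" "2 * card X \<le> card D" using card_darts by auto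
qed

text \<open>Coboundaries of vertex indicators give
  |V| - 1 independent cocycles, and boundaries of faces minus a fixed face give |F| - 1
  independent cochains mapped injectively to independent face sums; a further cocycle
  that is not a coboundary would yield |V| + |F| - 1 > |E| independent cochains,
  contradicting Euler's formula.\<close>
theorem cocycle_is_coboundary:
  fixes f :: "'d \<Rightarrow> 'a::field"
  assumes anti: "\<forall>d\<in>D. f (rv d) = - f d" and cocycle: "\<forall>d\<in>D. (\<Sum>x\<in>orb fs d. f x) = 0"
  shows "\<exists>g :: 'v \<Rightarrow> 'a. \<forall>d\<in>D. f d = g (tail (rv d)) - g (tail d)"
proof (rule ccontr)
  assume no_potential: "\<not> ?thesis"
  interpret L: Vector_Spaces.linear "fun_scale :: 'a \<Rightarrow> ('v \<Rightarrow> 'a) \<Rightarrow> _" fun_scale coboundary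
    by (rule linear_coboundary)
  obtain Y :: "('d \<Rightarrow> 'a) set" where Y: "fun_space.independent Y" "finite Y"
    "Suc (card Y) = card (verts D tail)" "Y \<subseteq> range coboundary"
    by (rule independent_coboundaries)
  obtain S :: "('d \<Rightarrow> 'a) set" where S: "S \<subseteq> cochains" "finite S" "Suc (card S) = card faces"
    "inj_on face_sum S" "fun_space.independent (face_sum ` S)"
    by (rule independent_face_boundaries)
  define f' where "f' = (\<lambda>x. if x \<in> D then f x else 0)"
  have "f' \<notin> range coboundary"
    using no_potential by (auto simp: f'_def coboundary_def fun_eq_iff) metis
  moreover have "fun_space.span Y \<subseteq> range coboundary"
    using Y(4) L.subspace_image[OF fun_space.subspace_UNIV] by (intro fun_space.span_minimal) auto
  ultimately have indep_fY: "fun_space.independent (insert f' Y)" and "f' \<notin> Y"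
    using fun_space.independent_insertI[OF _ Y(1)] fun_space.span_superset by blast+
  have "face_sum f' = 0"
    using cocycle F.orb_subset by (auto simp: face_sum_def f'_def fun_eq_iff subset_iff cong: sum.cong)
  then have "\<forall>x\<in>insert f' Y. face_sum x = 0" using Y(4) face_sum_coboundary by auto
  from independent_Un_kernel[OF linear_face_sum indep_fY this S(4,5)]
  have indep: "fun_space.independent (insert f' Y \<union> S)" and disj: "insert f' Y \<inter> S = {}" by auto
  have "insert f' Y \<union> S \<subseteq> cochains"
    using Y(4) S(1) coboundary_in_cochains anti rv_in by (auto simp: cochains_def f'_def)
  from card_independent_cochains[OF indep this] have "2 * card (insert f' Y \<union> S) \<le> card D" by blast
  moreover have "card (insert f' Y \<union> S) = card Y + 1 + card S"
    using disj \<open>f' \<notin> Y\<close> Y(2) S(2) by (simp add: card_Un_disjoint)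
  ultimately show False using euler Y(3) S(3) card_darts by simp
qed

end

section \<open>Sums of \<open>\<delta>\<close> and walks\<close>

lemma dlt_swap:
  "c u \<in> {1,2,3} \<Longrightarrow> c v \<in> {1,2,3} \<Longrightarrow> c u \<noteq> c v \<Longrightarrow> dlt c v u = - dlt c u v"
  unfolding dlt_def by auto

lemma dlt_cases: "dlt c u v = 1 \<or> dlt c u v = -1"
  unfolding dlt_def by auto

lemma abs_dlt [simp]: "\<bar>dlt c u v\<bar> = 1"
  unfolding dlt_def by auto

lemma dlt_cong_diff:
  "c u \<in> {1,2,3} \<Longrightarrow> c v \<in> {1,2,3} \<Longrightarrow> c u \<noteq> c v \<Longrightarrow> (3::int) dvd (dlt c u v - (c v - c u))"
  unfolding dlt_def by auto

lemma zip_map_upt_tl: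
  "zip (map g [0..<Suc m]) (tl (map g [0..<Suc m])) = map (\<lambda>t. (g t, g (Suc t))) [0..<m]"
  by (rule nth_equalityI) (auto simp: nth_tl simp del: upt_Suc)

lemma delta_map_upt: "delta c (map g [0..<Suc m]) = (\<Sum>t<m. dlt c (g t) (g (Suc t)))"
proof -
  have "delta c (map g [0..<Suc m]) = sum_list (map (\<lambda>t. dlt c (g t) (g (Suc t))) [0..<m])"
    unfolding delta_def zip_map_upt_tl by (simp add: comp_def)
  also have "\<dots> = (\<Sum>t<m. dlt c (g t) (g (Suc t)))"
    by (simp add: atLeast0LessThan flip: sum_set_upt_conv_sum_list_nat)
  finally show ?thesis .
qed

lemma sum_list_zip_telescope:
  "W \<noteq> [] \<Longrightarrow> (\<And>u v. (u, v) \<in> set (zip W (tl W)) \<Longrightarrow> F u v = g v - g u) \<Longrightarrow>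
   sum_list (map (\<lambda>(u, v). F u v) (zip W (tl W))) = (g (last W) - g (hd W) :: 'a::ab_group_add)"
proof (induction W)
  case (Cons x W)
  then show ?case by (cases W) auto
qed simp

lemma in_set_zip_tl_rev:
  assumes "(u, v) \<in> set (zip (rev W) (tl (rev W)))"
  shows "(v, u) \<in> set (zip W (tl W))"
proof -
  obtain n where n: "rev W ! n = u" "tl (rev W) ! n = v" "n < length W - 1"
    using assms unfolding in_set_zip by auto
  let ?j = "length W - 2 - n"
  have "Suc (length W - Suc (Suc n)) = length W - Suc n" using n by simp
  then have "W ! ?j = v" "tl W ! ?j = u" using n by (simp_all add: nth_tl rev_nth)
  moreover have "?j < length W - 1" using n by simp
  ultimately show ?thesis unfolding in_set_zip by (intro exI[of _ ?j]) auto
qed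

lemma delta_segment_telescope:
  fixes g :: "'v \<Rightarrow> real"
  assumes fwd: "\<And>j. dlt c (b j) (b (Suc j)) = g (b (Suc j)) - g (b j)"
    and bwd: "\<And>j. dlt c (b (Suc j)) (b j) = g (b j) - g (b (Suc j))"
    and Q: "Q = map (\<lambda>t. b (i + t)) [0..<Suc m] \<or> Q = rev (map (\<lambda>t. b (i + t)) [0..<Suc m])"
  shows "delta c Q = g (last Q) - g (hd Q)"
proof -
  define Qf where "Qf = map (\<lambda>t. b (i + t)) [0..<Suc m]"
  have Qf_pairs: "\<exists>j. u = b j \<and> v = b (Suc j)" if "(u, v) \<in> set (zip Qf (tl Qf))" for u v
    using that unfolding Qf_def zip_map_upt_tl by auto
  have "real_of_int (delta c Q) = sum_list (map (\<lambda>(u, v). real_of_int (dlt c u v)) (zip Q (tl Q)))"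
    unfolding delta_def by (simp add: sum_list_of_int[symmetric] comp_def case_prod_unfold)
  also have "\<dots> = g (last Q) - g (hd Q)"
  proof (rule sum_list_zip_telescope)
    show "Q \<noteq> []" using Q by auto
    fix u v assume uv: "(u, v) \<in> set (zip Q (tl Q))"
    show "real_of_int (dlt c u v) = g v - g u"
    proof (cases "Q = Qf")
      case True
      then show ?thesis using Qf_pairs uv fwd by blast
    next
      case False
      then have "(v, u) \<in> set (zip Qf (tl Qf))"
        using Q in_set_zip_tl_rev[of u v Qf] uv unfolding Qf_def by auto
      then show ?thesis using Qf_pairs bwd by blast
    qed
  qed
  finally show ?thesis .
qed

lemma even_sum_odd_iff_even_card:
  "finite A \<Longrightarrow> \<forall>x\<in>A. odd (h x :: int) \<Longrightarrow> even (sum h A) \<longleftrightarrow> even (card A)"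
  by (induction A rule: finite_induct) auto

lemma nth_in_butlast_tl: assumes "0 < i" "i < length L - 1" shows "L ! i \<in> set (butlast (tl L))"
proof -
  have "butlast (tl L) ! (i - 1) = L ! i" using assms by (simp add: nth_butlast nth_tl)
  moreover have "i - 1 < length (butlast (tl L))" using assms by simp
  ultimately show ?thesis by (metis nth_mem)
qed

fun walk :: "'d set \<Rightarrow> ('d \<Rightarrow> 'v) \<Rightarrow> ('d \<Rightarrow> 'd) \<Rightarrow> 'v \<Rightarrow> 'd list \<Rightarrow> 'v \<Rightarrow> bool" where
  "walk D tail rv u [] v \<longleftrightarrow> u = v"
| "walk D tail rv u (d # ps) v \<longleftrightarrow> d \<in> D \<and> tail d = u \<and> walk D tail rv (tail (rv d)) ps v"

fun walk_verts :: "('d \<Rightarrow> 'v) \<Rightarrow> ('d \<Rightarrow> 'd) \<Rightarrow> 'v \<Rightarrow> 'd list \<Rightarrow> 'v list" where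
  "walk_verts tail rv u [] = [u]"
| "walk_verts tail rv u (d # ps) = u # walk_verts tail rv (tail (rv d)) ps"

lemma walk_append:
  "walk D tail rv u (ps @ qs) w \<longleftrightarrow> (\<exists>v. walk D tail rv u ps v \<and> walk D tail rv v qs w)"
  by (induction ps arbitrary: u) auto

lemma walk_verts_ne [simp]: "walk_verts tail rv u ps \<noteq> []"
  by (cases ps) auto

lemma last_walk_verts: "walk D tail rv u ps v \<Longrightarrow> last (walk_verts tail rv u ps) = v"
  by (induction ps arbitrary: u) auto

lemma hd_walk_verts: "hd (walk_verts tail rv u ps) = u"
  by (cases ps) auto

lemma length_walk_verts: "length (walk_verts tail rv u ps) = Suc (length ps)"
  by (induction ps arbitrary: u) auto

lemma walk_set: "walk D tail rv u ps v \<Longrightarrow> set ps \<subseteq> D"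
  by (induction ps arbitrary: u) auto

lemma walk_nth:
  "walk D tail rv u qs v \<Longrightarrow> j < length qs \<Longrightarrow>
   tail (qs ! j) = walk_verts tail rv u qs ! j \<and> tail (rv (qs ! j)) = walk_verts tail rv u qs ! Suc j"
proof (induction qs arbitrary: u j)
  case (Cons d qs)
  then show ?case by (cases j; cases qs) auto
qed simp

lemma dpath_verts_eq_walk_verts:
  "walk D tail rv u ps v \<Longrightarrow> ps \<noteq> [] \<Longrightarrow> dpath_verts tail rv ps = walk_verts tail rv u ps"
proof (induction ps arbitrary: u)
  case (Cons d ps)
  then show ?case by (cases ps) (auto simp: dpath_verts_def)
qed simp

lemma walk_consecutive:
  "walk D tail rv u ps v \<Longrightarrow> Suc i < length ps \<Longrightarrow> tail (rv (ps ! i)) = tail (ps ! Suc i)"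
  using walk_nth[of D tail rv u ps v i] walk_nth[of D tail rv u ps v "Suc i"] by simp

lemma walk_of_consecutive:
  "set ps \<subseteq> D \<Longrightarrow> (\<forall>i. Suc i < length ps \<longrightarrow> tail (rv (ps ! i)) = tail (ps ! Suc i))
   \<Longrightarrow> ps \<noteq> [] \<Longrightarrow> walk D tail rv (tail (hd ps)) ps (tail (rv (last ps)))"
proof (induction ps)
  case (Cons d ps)
  show ?case
  proof (cases ps)
    case (Cons e qs)
    have "\<forall>i. Suc i < length ps \<longrightarrow> tail (rv (ps ! i)) = tail (ps ! Suc i)"
      using Cons.prems(2) by (metis Suc_less_eq length_Cons nth_Cons_Suc)
    moreover have "tail (rv d) = tail (hd ps)" using Cons.prems(2)[rule_format, of 0] \<open>ps = e # qs\<close> by auto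
    ultimately show ?thesis using Cons.IH Cons.prems \<open>ps = e # qs\<close> by auto
  qed (use Cons in auto)
qed simp

lemma walk_lipschitz:
  fixes g :: "'v \<Rightarrow> real"
  assumes "walk D tail rv u ps v" "\<forall>d\<in>D. \<bar>g (tail (rv d)) - g (tail d)\<bar> \<le> 1"
  shows "\<bar>g v - g u\<bar> \<le> length ps"
  using assms(1)
proof (induction ps arbitrary: u)
  case (Cons d ps)
  then have "\<bar>g v - g (tail (rv d))\<bar> \<le> length ps" "\<bar>g (tail (rv d)) - g u\<bar> \<le> 1"
    using assms(2) by auto
  then show ?case by simp
qed simp

lemma walk_parity:
  assumes "\<And>d. d \<in> D \<Longrightarrow> side (tail (rv d)) \<longleftrightarrow> \<not> side (tail d)" "walk D tail rv u ps v"
  shows "(side v \<longleftrightarrow> side u) \<longleftrightarrow> even (length ps)"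
  using assms(2)
proof (induction ps arbitrary: u)
  case (Cons d ps)
  then have "d \<in> D" "tail d = u" "(side v \<longleftrightarrow> side (tail (rv d))) \<longleftrightarrow> even (length ps)" by auto
  then show ?case using assms(1) by auto
qed simp

lemma walk_suffix:
  "walk D tail rv u ps v \<Longrightarrow> x \<in> set (walk_verts tail rv u ps) \<Longrightarrow>
   \<exists>m\<le>length ps. walk D tail rv x (drop m ps) v"
proof (induction ps arbitrary: u)
  case (Cons d ps)
  show ?case
  proof (cases "x = u")
    case False
    then obtain m where "m \<le> length ps" "walk D tail rv x (drop m ps) v" using Cons by auto
    then show ?thesis by (intro exI[of _ "Suc m"]) auto
  qed (use Cons.prems in \<open>auto intro: exI[of _ 0]\<close>)
qed auto

lemma shorter_walk_if_not_distinct: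
  "walk D tail rv u ps v \<Longrightarrow> \<not> distinct (walk_verts tail rv u ps) \<Longrightarrow>
   \<exists>qs. walk D tail rv u qs v \<and> length qs < length ps"
proof (induction ps arbitrary: u)
  case (Cons d ps)
  show ?case
  proof (cases "u \<in> set (walk_verts tail rv (tail (rv d)) ps)")
    case True
    then obtain m where "m \<le> length ps" "walk D tail rv u (drop m ps) v"
      using walk_suffix Cons.prems by force
    then show ?thesis by (intro exI[of _ "drop m ps"]) auto
  next
    case False
    then obtain qs where "walk D tail rv (tail (rv d)) qs v" "length qs < length ps"
      using Cons by auto
    then show ?thesis using Cons.prems by (intro exI[of _ "d # qs"]) auto
  qed
qed simp

lemma walk_first_return:
  "walk D tail rv u ps w \<Longrightarrow> ps \<noteq> [] \<Longrightarrow> w \<in> B \<Longrightarrow>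
  \<exists>qs rs c. ps = qs @ rs \<and> qs \<noteq> [] \<and> walk D tail rv u qs c \<and> walk D tail rv c rs w \<and> c \<in> B \<and>
    (\<forall>x\<in>set (butlast (tl (walk_verts tail rv u qs))). x \<notin> B)"
proof (induction ps arbitrary: u)
  case (Cons d ps)
  let ?c1 = "tail (rv d)"
  have w1: "walk D tail rv ?c1 ps w" and dD: "d \<in> D" "tail d = u" using Cons.prems by auto
  show ?case
  proof (cases "?c1 \<in> B")
    case True
    then show ?thesis using w1 dD by (intro exI[of _ "[d]"] exI[of _ ps] exI[of _ ?c1]) auto
  next
    case False
    have "ps \<noteq> []" using False w1 Cons.prems(3) by (cases ps) auto
    then obtain qs rs c where IH: "ps = qs @ rs" "qs \<noteq> []" "walk D tail rv ?c1 qs c"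
      "walk D tail rv c rs w" "c \<in> B" "\<forall>x\<in>set (butlast (tl (walk_verts tail rv ?c1 qs))). x \<notin> B"
      using Cons.IH[OF w1 _ Cons.prems(3)] by blast
    obtain rest where "walk_verts tail rv ?c1 qs = ?c1 # rest" "rest \<noteq> []"
      using IH(2) by (cases qs) auto
    then have "butlast (tl (walk_verts tail rv u (d # qs))) = ?c1 # butlast (tl (walk_verts tail rv ?c1 qs))"
      by simp
    then show ?thesis using IH dD False by (intro exI[of _ "d # qs"] exI[of _ rs] exI[of _ c]) auto
  qed
qed simp

section \<open>The boundary of a quadrangulated disk\<close>

locale quad_disk = spherical_map D tail rv sc for D :: "'d set" and tail :: "'d \<Rightarrow> 'v" and rv sc +
  fixes d0 :: 'd
  assumes d0_in: "d0 \<in> D"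
    and inj_on_tail_outer: "inj_on tail (outer_face rv sc d0)"
    and card_inner_face: "\<And>d. d \<in> D \<Longrightarrow> d \<notin> outer_face rv sc d0 \<Longrightarrow> card (orb (face_succ rv sc) d) = 4"
begin

abbreviation "outer \<equiv> outer_face rv sc d0"

definition "blen = card outer"
definition "bdart n = (fs ^^ n) d0"
definition "bvtx n = tail (bdart n)"

lemma outer_eq: "outer = orb fs d0" unfolding outer_face_def ..

lemma blen_eq_period: "blen = F.period d0"
  unfolding blen_def outer_eq using F.card_orb[OF d0_in] .

lemma blen_pos: "blen > 0" using blen_eq_period F.period_pos[OF d0_in] by simp

lemma bdart_mod: "bdart n = bdart (n mod blen)"
  unfolding bdart_def blen_eq_period using F.funpow_mod_period[OF d0_in] .

lemma bvtx_mod: "bvtx n = bvtx (n mod blen)" unfolding bvtx_def using bdart_mod by simp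

lemma bvtx_add_blen: "bvtx (n + blen) = bvtx n" using bvtx_mod[of "n + blen"] bvtx_mod[of n] by simp

lemma outer_eq_image: "outer = bdart ` {..<blen}"
  unfolding outer_eq blen_eq_period bdart_def using F.orb_eq_image_period[OF d0_in] .

lemma bdart_in_outer: "bdart n \<in> outer"
  unfolding outer_eq bdart_def by (rule F.funpow_in_orb)

lemma bdart_in: "bdart n \<in> D"
  using F.orb_subset[OF d0_in] bdart_in_outer outer_eq by blast

lemma inj_on_bdart: "inj_on bdart {..<blen}"
  unfolding blen_eq_period bdart_def using F.inj_on_funpow_period[OF d0_in] .

lemma inj_on_bvtx: "inj_on bvtx {..<blen}"
  using inj_on_tail_outer inj_on_bdart comp_inj_on[of bdart "{..<blen}" tail]
  unfolding outer_eq_image bvtx_def by (simp add: comp_def)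

lemma tail_rv_bdart: "tail (rv (bdart n)) = bvtx (Suc n)"
  unfolding bvtx_def using tail_fs[OF bdart_in] by (simp add: bdart_def)

lemma bvert_eq_bvtx: "bvert tail rv sc d0 = bvtx"
  unfolding bvert_def bvtx_def fun_eq_iff using bdart_mod unfolding bdart_def blen_def
  by (simp add: outer_eq)

lemma range_bvtx: "range bvtx = bvtx ` {..<blen}"
  using bvtx_mod blen_pos by (auto intro!: image_eqI[of _ bvtx "_ mod blen"])

lemma bverts_eq_range_bvtx: "bverts tail rv sc d0 = range bvtx"
  unfolding bverts_def range_bvtx outer_eq_image bvtx_def by (simp add: image_image)

lemma bwalk_eq: "bwalk tail rv sc d0 = map bvtx [0..<Suc blen]"
  unfolding bwalk_def bvert_eq_bvtx blen_def by simp

lemma delta_bwalk: "delta c (bwalk tail rv sc d0) = (\<Sum>t<blen. dlt c (bvtx t) (bvtx (Suc t)))"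
  unfolding bwalk_eq by (rule delta_map_upt)

lemma boundary_dart_cases:
  assumes "d \<in> D" "d \<in> outer \<or> rv d \<in> outer"
  obtains n where "tail d = bvtx n" "tail (rv d) = bvtx (Suc n)"
  | n where "tail d = bvtx (Suc n)" "tail (rv d) = bvtx n"
  using assms rv_rv[OF assms(1)] tail_rv_bdart unfolding outer_eq_image bvtx_def by force

definition bidx :: "'v \<Rightarrow> nat" where "bidx v = (THE i. i < blen \<and> bvtx i = v)"

lemma bidx_bvtx: "bidx (bvtx n) = n mod blen"
  unfolding bidx_def
proof (rule the_equality)
  show "n mod blen < blen \<and> bvtx (n mod blen) = bvtx n" using blen_pos bvtx_mod by simp
  show "i = n mod blen" if "i < blen \<and> bvtx i = bvtx n" for i
    using inj_on_bvtx that bvtx_mod[of n] blen_pos unfolding inj_on_def by (metis lessThan_iff mod_less_divisor)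
qed

lemma bvtx_bidx: "v \<in> range bvtx \<Longrightarrow> bvtx (bidx v) = v"
  using bidx_bvtx bvtx_mod by auto

lemma bidx_less: "v \<in> range bvtx \<Longrightarrow> bidx v < blen"
  using bidx_bvtx blen_pos by auto

section \<open>Necessity of the spoke condition\<close>

text \<open>Around a closed walk the values of \<open>dlt\<close> sum to a multiple of 3, since they agree
  modulo 3 with the colour differences; on a face of length 4 the sum is also even and
  at most 4 in absolute value.\<close>
lemma face_dlt_sum_zero:
  fixes \<phi> :: "'v \<Rightarrow> int"
  assumes col: "coloring D tail rv \<phi>"
    and boundary: "(\<Sum>t<blen. dlt \<phi> (bvtx t) (bvtx (Suc t))) = 0"
    and d: "d \<in> D"
  shows "(\<Sum>x\<in>orb fs d. dlt \<phi> (tail x) (tail (rv x))) = 0"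
proof (cases "d \<in> outer")
  case True
  then have "orb fs d = bdart ` {..<blen}"
    using F.orb_eq_of_mem[OF d0_in] outer_eq outer_eq_image by auto
  then show ?thesis
    using inj_on_bdart boundary by (simp add: sum.reindex bvtx_def[symmetric] tail_rv_bdart)
next
  case False
  let ?S = "\<Sum>x\<in>orb fs d. dlt \<phi> (tail x) (tail (rv x))"
  have four: "card (orb fs d) = 4" using card_inner_face[OF d False] .
  have sub: "orb fs d \<subseteq> D" using F.orb_subset[OF d] .
  have "(\<Sum>x\<in>orb fs d. \<phi> (tail (rv x))) = (\<Sum>x\<in>orb fs d. \<phi> (tail (fs x)))"
    using sub tail_fs by (intro sum.cong) auto
  also have "\<dots> = (\<Sum>x\<in>orb fs d. \<phi> (tail x))" using F.sum_orb_shift[OF d] .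
  finally have diff0: "(\<Sum>x\<in>orb fs d. \<phi> (tail (rv x)) - \<phi> (tail x)) = 0"
    by (simp add: sum_subtractf)
  have "(3::int) dvd (\<Sum>x\<in>orb fs d. dlt \<phi> (tail x) (tail (rv x)) - (\<phi> (tail (rv x)) - \<phi> (tail x)))"
    using sub col rv_in unfolding coloring_def verts_def by (intro dvd_sum dlt_cong_diff) auto
  then have "(3::int) dvd ?S" using diff0 by (simp add: sum_subtractf)
  moreover have "\<forall>x\<in>orb fs d. odd (dlt \<phi> (tail x) (tail (rv x)))"
    using dlt_cases by (metis odd_one even_minus)
  then have "even ?S" using even_sum_odd_iff_even_card[OF F.finite_orb[OF d]] four by simp
  moreover have "\<bar>?S\<bar> \<le> 4"
    using sum_abs[of "\<lambda>x. dlt \<phi> (tail x) (tail (rv x))" "orb fs d"] four by simp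
  ultimately show ?thesis by presburger
qed

lemma coloring_potential:
  fixes \<phi> :: "'v \<Rightarrow> int"
  assumes col: "coloring D tail rv \<phi>" and boundary: "delta \<phi> (bwalk tail rv sc d0) = 0"
  obtains g :: "'v \<Rightarrow> real"
  where "\<And>d. d \<in> D \<Longrightarrow> dlt \<phi> (tail d) (tail (rv d)) = g (tail (rv d)) - g (tail d)"
proof -
  define f where "f d = real_of_int (dlt \<phi> (tail d) (tail (rv d)))" for d
  have "f (rv d) = - f d" if d: "d \<in> D" for d
    using dlt_swap[of \<phi> "tail d" "tail (rv d)"] col d rv_in[OF d] rv_rv[OF d]
    unfolding f_def coloring_def verts_def by auto
  moreover have "(\<Sum>x\<in>orb fs d. f x) = 0" if "d \<in> D" for d
    using face_dlt_sum_zero[OF col _ that] boundary unfolding f_def delta_bwalk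
    by (metis of_int_0 of_int_sum)
  ultimately obtain g :: "'v \<Rightarrow> real" where "\<forall>d\<in>D. f d = g (tail (rv d)) - g (tail d)"
    using cocycle_is_coboundary by blast
  then show ?thesis using that unfolding f_def by blast
qed

theorem spoke_bound_of_extension:
  fixes \<phi> \<psi> :: "'v \<Rightarrow> int"
  assumes col: "coloring D tail rv \<phi>" and ext: "\<forall>v\<in>bverts tail rv sc d0. \<phi> v = \<psi> v"
    and wind: "winding \<psi> (bwalk tail rv sc d0) = 0"
    and sp: "spoke D tail rv sc d0 P" and bs: "base tail rv sc d0 P Q"
  shows "int (length P) \<ge> \<bar>delta \<psi> Q\<bar>"
proof -
  have same_dlt: "dlt \<phi> (bvtx a) (bvtx b) = dlt \<psi> (bvtx a) (bvtx b)" for a b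
    using ext unfolding bverts_eq_range_bvtx by (simp add: dlt_def)
  have "delta \<psi> (bwalk tail rv sc d0) = 0" using wind unfolding winding_def by simp
  then have "delta \<phi> (bwalk tail rv sc d0) = 0" using same_dlt unfolding delta_bwalk by simp
  then obtain g :: "'v \<Rightarrow> real"
    where g: "\<And>d. d \<in> D \<Longrightarrow> dlt \<phi> (tail d) (tail (rv d)) = g (tail (rv d)) - g (tail d)"
    using coloring_potential[OF col] by blast
  define W where "W = dpath_verts tail rv P"
  have "is_path D tail rv P" using sp unfolding spoke_def by blast
  then have "walk D tail rv (tail (hd P)) P (tail (rv (last P)))"
    unfolding is_path_def by (intro walk_of_consecutive) auto
  moreover have "hd W = tail (hd P)" "last W = tail (rv (last P))"
    using \<open>is_path D tail rv P\<close> unfolding W_def dpath_verts_def is_path_def by (auto simp: hd_append hd_map)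
  ultimately have walk_P: "walk D tail rv (hd W) P (last W)" by simp
  have "\<bar>g (last W) - g (hd W)\<bar> \<le> length P"
    using walk_lipschitz[OF walk_P] g by (metis abs_dlt of_int_1 of_int_abs order_refl)
  moreover obtain i m
    where "Q = map (\<lambda>t. bvtx (i + t)) [0..<Suc m] \<or> Q = rev (map (\<lambda>t. bvtx (i + t)) [0..<Suc m])"
      and "hd Q = hd W" "last Q = last W"
    using bs unfolding base_def bvert_eq_bvtx W_def by auto
  moreover have "delta \<psi> Q = g (last Q) - g (hd Q)" if
    "Q = map (\<lambda>t. bvtx (i + t)) [0..<Suc m] \<or> Q = rev (map (\<lambda>t. bvtx (i + t)) [0..<Suc m])"
  proof (rule delta_segment_telescope[OF _ _ that])
    fix j
    show "dlt \<psi> (bvtx j) (bvtx (Suc j)) = g (bvtx (Suc j)) - g (bvtx j)"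
      using g[OF bdart_in[of j]] same_dlt by (simp add: bvtx_def[symmetric] tail_rv_bdart)
    show "dlt \<psi> (bvtx (Suc j)) (bvtx j) = g (bvtx j) - g (bvtx (Suc j))"
      using g[OF rv_in[OF bdart_in[of j]]] same_dlt rv_rv[OF bdart_in[of j]]
      by (simp add: bvtx_def[symmetric] tail_rv_bdart)
  qed
  ultimately have "\<bar>real_of_int (delta \<psi> Q)\<bar> \<le> real (length P)" by auto
  then show ?thesis by linarith
qed

end

section \<open>Sufficiency of the spoke condition\<close>

context spherical_map
begin

lemma walk_exists: assumes "x \<in> D" "y \<in> D" shows "\<exists>ps. walk D tail rv (tail x) ps (tail y)"
proof -
  have "(x, y) \<in> ({(x, sc x) | x. x \<in> D} \<union> {(x, rv x) | x. x \<in> D})\<^sup>*"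
    using connected_rtrancl assms by blast
  then show ?thesis
  proof (induction rule: rtrancl_induct)
    case base show ?case by (intro exI[of _ "[]"]) simp
  next
    case (step y z)
    then obtain ps where ps: "walk D tail rv (tail x) ps (tail y)" by blast
    from step(2) consider "z = sc y" "y \<in> D" | "z = rv y" "y \<in> D" by blast
    then show ?case
    proof cases
      case 1 then show ?thesis using ps tail_sc by auto
    next
      case 2
      then have "walk D tail rv (tail x) (ps @ [y]) (tail z)" using ps by (auto simp: walk_append)
      then show ?thesis by blast
    qed
  qed
qed

definition walk_dist :: "'v \<Rightarrow> 'v \<Rightarrow> nat" where
  "walk_dist u v = (LEAST n. \<exists>ps. walk D tail rv u ps v \<and> length ps = n)"

lemma walk_dist_le: "walk D tail rv u ps v \<Longrightarrow> walk_dist u v \<le> length ps"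
  unfolding walk_dist_def by (rule Least_le) blast

lemma shortest_walk: "walk D tail rv u ps v \<Longrightarrow> \<exists>qs. walk D tail rv u qs v \<and> length qs = walk_dist u v"
  unfolding walk_dist_def by (rule LeastI_ex) blast

lemma of_nat_even_bit: "even n \<Longrightarrow> (of_nat n :: bit) = 0"
  by (auto elim: evenE)

text \<open>The cocycle that is 1 on every dart, over the two-element field, is a coboundary.\<close>
lemma bipartition_of_even_faces:
  assumes "\<And>d. d \<in> D \<Longrightarrow> even (card (orb fs d))"
  obtains side :: "'v \<Rightarrow> bool" where "\<And>d. d \<in> D \<Longrightarrow> side (tail (rv d)) \<longleftrightarrow> \<not> side (tail d)"
proof -
  have "\<forall>d\<in>D. (\<Sum>x\<in>orb fs d. 1) = (0::bit)"
    using assms by (simp add: of_nat_even_bit)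
  moreover have "\<forall>d\<in>D. (1::bit) = - 1" by simp
  ultimately obtain g :: "'v \<Rightarrow> bit" where "\<forall>d\<in>D. 1 = g (tail (rv d)) - g (tail d)"
    using cocycle_is_coboundary[of "\<lambda>_. 1 :: bit"] by blast
  then have "d \<in> D \<Longrightarrow> g (tail (rv d)) \<noteq> g (tail d)" for d by force
  then show ?thesis by (intro that[of "\<lambda>v. g v = 1"]) (metis bit_not_one_iff)
qed

end

context quad_disk
begin

lemma segment_is_spoke:
  assumes w: "walk D tail rv b' qs c" and ne: "qs \<noteq> []"
    and dist: "distinct (walk_verts tail rv b' qs)"
    and ends: "b' \<in> range bvtx" "c \<in> range bvtx"
    and interior: "\<forall>x\<in>set (butlast (tl (walk_verts tail rv b' qs))). x \<notin> range bvtx"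
    and not_edge: "\<not> (length qs = 1 \<and> (hd qs \<in> outer \<or> rv (hd qs) \<in> outer))"
  shows "spoke D tail rv sc d0 qs"
proof -
  define W where "W = walk_verts tail rv b' qs"
  have W: "dpath_verts tail rv qs = W" unfolding W_def using dpath_verts_eq_walk_verts[OF w ne] .
  have inner: "x \<notin> outer \<and> rv x \<notin> outer" if xq: "x \<in> set qs" for x
  proof (rule ccontr)
    assume "\<not> ?thesis"
    then have xo: "x \<in> outer \<or> rv x \<in> outer" by blast
    obtain j where j: "j < length qs" "x = qs ! j" using xq by (metis in_set_conv_nth)
    have B: "tail x \<in> range bvtx" "tail (rv x) \<in> range bvtx"
      using boundary_dart_cases[OF _ xo] walk_set[OF w] xq by (metis rangeI subsetD)+
    have Wj: "tail x = W ! j" "tail (rv x) = W ! Suc j"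
      using walk_nth[OF w j(1)] j(2) W_def by auto
    have "length W = Suc (length qs)" unfolding W_def by (rule length_walk_verts)
    then have not_B: "W ! i \<notin> range bvtx" if "0 < i" "i < length qs" for i
      using interior nth_in_butlast_tl[of i W] that unfolding W_def[symmetric] by auto
    have "j = 0" using not_B[of j] B Wj j(1) by (metis not_gr_zero)
    moreover have "Suc j = length qs" using not_B[of "Suc j"] B Wj j(1) by (metis Suc_lessI zero_less_Suc)
    ultimately show False using not_edge xo j ne by (simp add: hd_conv_nth)
  qed
  have "is_path D tail rv qs"
    unfolding is_path_def W using ne walk_set[OF w] walk_consecutive[OF w] dist W_def by blast
  moreover have "hd W = b'" "last W = c"
    unfolding W_def using hd_walk_verts last_walk_verts[OF w] by auto
  ultimately show ?thesis
    unfolding spoke_def Let_def W bverts_eq_range_bvtx using ends interior inner W_def by auto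
qed

end

locale spoke_condition = quad_disk D tail rv sc d0
  for D :: "'d set" and tail :: "'d \<Rightarrow> 'v" and rv sc d0 +
  fixes \<psi> :: "'v \<Rightarrow> int"
  assumes bcol: "bcoloring tail rv sc d0 \<psi>"
    and wind: "winding \<psi> (bwalk tail rv sc d0) = 0"
    and spoke_bound: "\<And>P Q. spoke D tail rv sc d0 P \<Longrightarrow> base tail rv sc d0 P Q \<Longrightarrow> int (length P) \<ge> \<bar>delta \<psi> Q\<bar>"
begin

text \<open>Boundary heights are well defined on B because the winding number is 0.\<close>

definition bheight :: "nat \<Rightarrow> int" where "bheight n = (\<Sum>t<n. dlt \<psi> (bvtx t) (bvtx (Suc t)))"

definition bheight_at :: "'v \<Rightarrow> int" where "bheight_at v = bheight (bidx v)"

lemma psi_bvtx: "\<psi> (bvtx n) \<in> {1,2,3}"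
  using bcol unfolding bcoloring_def bverts_eq_range_bvtx by auto

lemma psi_bvtx_Suc: "\<psi> (bvtx n) \<noteq> \<psi> (bvtx (Suc n))"
  using bcol bdart_in_outer tail_rv_bdart unfolding bcoloring_def bvtx_def by metis

lemma bheight_Suc: "bheight (Suc n) = bheight n + dlt \<psi> (bvtx n) (bvtx (Suc n))"
  unfolding bheight_def by simp

lemma bheight_add: "bheight (a + b) = bheight a + (\<Sum>t<b. dlt \<psi> (bvtx (a + t)) (bvtx (Suc (a + t))))"
  by (induction b) (simp_all add: bheight_def)

lemma bheight_blen: "bheight blen = 0"
proof -
  have "delta \<psi> (bwalk tail rv sc d0) = 0" using wind unfolding winding_def by simp
  then show ?thesis unfolding delta_bwalk bheight_def .
qed

lemma bheight_mod: "bheight n = bheight (n mod blen)"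
proof (induction n rule: less_induct)
  case (less n)
  show ?case
  proof (cases "n < blen")
    case False
    have "bvtx (Suc (t + blen)) = bvtx (Suc t)" for t using bvtx_add_blen[of "Suc t"] by simp
    then have "bheight (blen + (n - blen)) = bheight (n - blen)"
      using bheight_add[of blen "n - blen"] bheight_blen bvtx_add_blen
      by (simp add: bheight_def add.commute)
    then have "bheight n = bheight (n - blen)" using False by simp
    also have "\<dots> = bheight ((n - blen) mod blen)" using less blen_pos False by simp
    finally show ?thesis using False by (simp add: mod_if)
  qed simp
qed

lemma bheight_at_bvtx: "bheight_at (bvtx n) = bheight n"
  unfolding bheight_at_def bidx_bvtx using bheight_mod by simp

lemma even_blen: "even blen"
proof -
  have "\<forall>t\<in>{..<blen}. odd (dlt \<psi> (bvtx t) (bvtx (Suc t)))"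
    using dlt_cases by (metis odd_one even_minus)
  then show ?thesis
    using even_sum_odd_iff_even_card[of "{..<blen}" "\<lambda>t. dlt \<psi> (bvtx t) (bvtx (Suc t))"] bheight_blen
    unfolding bheight_def by simp
qed

lemma psi_cong_bheight: "(3::int) dvd (\<psi> (bvtx n) - \<psi> (bvtx 0) - bheight n)"
proof (induction n)
  case (Suc n)
  have "(3::int) dvd (dlt \<psi> (bvtx n) (bvtx (Suc n)) - (\<psi> (bvtx (Suc n)) - \<psi> (bvtx n)))"
    by (rule dlt_cong_diff[of \<psi> "bvtx n" "bvtx (Suc n)", OF psi_bvtx psi_bvtx psi_bvtx_Suc])
  with Suc have "(3::int) dvd ((\<psi> (bvtx n) - \<psi> (bvtx 0) - bheight n)
      - (dlt \<psi> (bvtx n) (bvtx (Suc n)) - (\<psi> (bvtx (Suc n)) - \<psi> (bvtx n))))"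
    by (rule dvd_diff)
  then show ?case by (simp add: bheight_Suc algebra_simps)
qed (simp add: bheight_def)

lemma bheight_at_boundary_dart:
  assumes "d \<in> D" "d \<in> outer \<or> rv d \<in> outer"
  shows "bheight_at (tail (rv d)) - bheight_at (tail d) \<le> 1"
  using assms
proof (cases rule: boundary_dart_cases)
  case (1 n)
  then show ?thesis using dlt_cases[of \<psi> "bvtx n" "bvtx (Suc n)"] by (auto simp: bheight_at_bvtx bheight_Suc)
next
  case (2 n)
  then show ?thesis using dlt_cases[of \<psi> "bvtx n" "bvtx (Suc n)"] by (auto simp: bheight_at_bvtx bheight_Suc)
qed

lemma base_with_height_diff:
  assumes "hd (dpath_verts tail rv P) = b" "last (dpath_verts tail rv P) = c"
    and "b \<in> range bvtx" "c \<in> range bvtx"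
  shows "\<exists>Q. base tail rv sc d0 P Q \<and> delta \<psi> Q = bheight_at c - bheight_at b"
proof -
  define i where "i = bidx b"
  define m where "m = (bidx c + blen - i) mod blen"
  have i: "i < blen" "bvtx i = b" using bidx_less bvtx_bidx assms(3) unfolding i_def by auto
  have "(i + m) mod blen = (i + (bidx c + blen - i)) mod blen" unfolding m_def by (simp add: mod_add_right_eq)
  also have "\<dots> = bidx c" using i bidx_less[OF assms(4)] by simp
  finally have c: "bvtx (i + m) = c" using bvtx_mod[of "i + m"] bvtx_bidx[OF assms(4)] by simp
  define Q where "Q = map (\<lambda>t. bvtx (i + t)) [0..<Suc m]"
  have "base tail rv sc d0 P Q"
    unfolding base_def
  proof (intro conjI)
    show "\<exists>i m. i < card outer \<and> m < card outer \<and>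
        (Q = map (\<lambda>t. bvert tail rv sc d0 (i + t)) [0..<m + 1] \<or>
         Q = rev (map (\<lambda>t. bvert tail rv sc d0 (i + t)) [0..<m + 1]))"
      using i blen_pos unfolding bvert_eq_bvtx blen_def[symmetric] Q_def
      by (intro exI[of _ i] exI[of _ m]) (simp add: m_def)
    show "hd Q = hd (dpath_verts tail rv P)" using assms(1) i by (simp add: Q_def upt_conv_Cons del: upt_Suc)
    show "last Q = last (dpath_verts tail rv P)" using assms(2) c by (simp add: Q_def)
  qed
  moreover have "delta \<psi> Q = bheight (i + m) - bheight i"
    unfolding Q_def delta_map_upt bheight_add by simp
  ultimately show ?thesis using c i bheight_at_bvtx by metis
qed

text \<open>Such a segment is either a single edge of B or a spoke.\<close>
lemma segment_height_bound:
  assumes w: "walk D tail rv b qs c" and ne: "qs \<noteq> []"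
    and dist: "distinct (walk_verts tail rv b qs)"
    and ends: "b \<in> range bvtx" "c \<in> range bvtx"
    and interior: "\<forall>x\<in>set (butlast (tl (walk_verts tail rv b qs))). x \<notin> range bvtx"
  shows "bheight_at c - bheight_at b \<le> length qs"
proof (cases "length qs = 1 \<and> (hd qs \<in> outer \<or> rv (hd qs) \<in> outer)")
  case True
  then obtain x where "qs = [x]" "x \<in> outer \<or> rv x \<in> outer"
    by (metis One_nat_def length_0_conv length_Suc_conv list.sel(1))
  then show ?thesis using w bheight_at_boundary_dart by auto
next
  case False
  have sp: "spoke D tail rv sc d0 qs" by (rule segment_is_spoke[OF assms False])
  have "hd (dpath_verts tail rv qs) = b" "last (dpath_verts tail rv qs) = c"
    using dpath_verts_eq_walk_verts[OF w ne] hd_walk_verts last_walk_verts[OF w] by auto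
  then obtain Q where Q: "base tail rv sc d0 qs Q" "delta \<psi> Q = bheight_at c - bheight_at b"
    using base_with_height_diff ends by blast
  show ?thesis using spoke_bound[OF sp Q(1)] Q(2) by linarith
qed

lemma bheight_at_lipschitz:
  "walk D tail rv b ps c \<Longrightarrow> b \<in> range bvtx \<Longrightarrow> c \<in> range bvtx \<Longrightarrow>
   bheight_at c - bheight_at b \<le> length ps"
proof (induction "length ps" arbitrary: ps b c rule: less_induct)
  case less
  show ?case
  proof (cases "ps = []")
    case False
    obtain qs rs c' where split: "ps = qs @ rs" "qs \<noteq> []" "walk D tail rv b qs c'" "walk D tail rv c' rs c"
      "c' \<in> range bvtx" "\<forall>x\<in>set (butlast (tl (walk_verts tail rv b qs))). x \<notin> range bvtx"
      using walk_first_return[OF less.prems(1) False less.prems(3)] by blast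
    show ?thesis
    proof (cases "distinct (walk_verts tail rv b qs)")
      case True
      have "bheight_at c' - bheight_at b \<le> length qs"
        using segment_height_bound[OF split(3,2) True less.prems(2) split(5,6)] .
      moreover have "bheight_at c - bheight_at c' \<le> length rs"
        using less.hyps[of rs] split less.prems by auto
      ultimately show ?thesis using split(1) by simp
    next
      case False
      obtain qs' where "walk D tail rv b qs' c'" "length qs' < length qs"
        using shorter_walk_if_not_distinct[OF split(3) False] by blast
      then have "walk D tail rv b (qs' @ rs) c" "length (qs' @ rs) < length ps"
        using split by (auto simp: walk_append)
      then show ?thesis using less.hyps less.prems by fastforce
    qed
  qed (use less.prems in simp)
qed

text \<open>The largest extension of the boundary heights that changes by at most 1 along each edge.\<close>
definition height :: "'v \<Rightarrow> int" where
  "height v = Min ((\<lambda>b. bheight_at b + int (walk_dist b v)) ` range bvtx)"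

lemma finite_range_bvtx: "finite (range bvtx)" unfolding range_bvtx by simp

lemma height_le: "b \<in> range bvtx \<Longrightarrow> height v \<le> bheight_at b + int (walk_dist b v)"
  unfolding height_def using finite_range_bvtx by (intro Min_le) auto

lemma height_attained: "\<exists>b\<in>range bvtx. height v = bheight_at b + int (walk_dist b v)"
proof -
  have "height v \<in> (\<lambda>b. bheight_at b + int (walk_dist b v)) ` range bvtx"
    unfolding height_def using finite_range_bvtx by (intro Min_in) auto
  then show ?thesis by blast
qed

lemma shortest_walk_from_boundary:
  assumes "v \<in> verts D tail" "b \<in> range bvtx"
  obtains ps where "walk D tail rv b ps v" "length ps = walk_dist b v"
proof -
  obtain x where "x \<in> D" "v = tail x" using assms(1) unfolding verts_def by blast
  moreover obtain n where "b = tail (bdart n)" using assms(2) unfolding bvtx_def by blast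
  ultimately show ?thesis using walk_exists[OF bdart_in] shortest_walk that by metis
qed

lemma height_bvtx: "height (bvtx n) = bheight n"
proof (rule antisym)
  show "height (bvtx n) \<le> bheight n"
    using height_le[of "bvtx n" "bvtx n"] walk_dist_le[of "bvtx n" "[]" "bvtx n"] bheight_at_bvtx by simp
next
  obtain b where b: "b \<in> range bvtx" "height (bvtx n) = bheight_at b + int (walk_dist b (bvtx n))"
    using height_attained by blast
  moreover obtain ps where "walk D tail rv b ps (bvtx n)" "length ps = walk_dist b (bvtx n)"
    using shortest_walk_from_boundary[OF _ b(1)] bdart_in unfolding verts_def bvtx_def by blast
  ultimately show "bheight n \<le> height (bvtx n)"
    using bheight_at_lipschitz[of b ps "bvtx n"] bheight_at_bvtx by simp
qed

lemma height_edge: assumes d: "d \<in> D" shows "height (tail (rv d)) \<le> height (tail d) + 1"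
proof -
  obtain b where b: "b \<in> range bvtx" "height (tail d) = bheight_at b + int (walk_dist b (tail d))"
    using height_attained by blast
  obtain ps where "walk D tail rv b ps (tail d)" "length ps = walk_dist b (tail d)"
    using shortest_walk_from_boundary[OF _ b(1)] d unfolding verts_def by blast
  then have "walk_dist b (tail (rv d)) \<le> walk_dist b (tail d) + 1"
    using walk_dist_le[of b "ps @ [d]" "tail (rv d)"] d by (auto simp: walk_append)
  then show ?thesis using b height_le[OF b(1), of "tail (rv d)"] by simp
qed

lemma height_parity:
  assumes side: "\<And>d. d \<in> D \<Longrightarrow> side (tail (rv d)) \<longleftrightarrow> \<not> side (tail d)" and v: "v \<in> verts D tail"
  shows "even (height v) \<longleftrightarrow> (side v \<longleftrightarrow> side (bvtx 0))"
proof -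
  have bheight_parity: "even (bheight n) \<longleftrightarrow> (side (bvtx n) \<longleftrightarrow> side (bvtx 0))" for n
  proof (induction n)
    case (Suc n)
    have "side (bvtx (Suc n)) \<longleftrightarrow> \<not> side (bvtx n)"
      using side[OF bdart_in[of n]] tail_rv_bdart by (simp add: bvtx_def)
    then show ?case using Suc dlt_cases[of \<psi> "bvtx n" "bvtx (Suc n)"] by (auto simp: bheight_Suc)
  qed (simp add: bheight_def)
  obtain b where b: "b \<in> range bvtx" "height v = bheight_at b + int (walk_dist b v)"
    using height_attained by blast
  obtain ps where ps: "walk D tail rv b ps v" "length ps = walk_dist b v"
    using shortest_walk_from_boundary[OF v b(1)] by blast
  obtain n where "b = bvtx n" using b(1) by blast
  then show ?thesis
    using b(2) walk_parity[OF side ps(1)] ps(2) bheight_parity[of n] bheight_at_bvtx by auto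
qed

lemma height_step:
  assumes d: "d \<in> D"
  shows "height (tail (rv d)) = height (tail d) + 1 \<or> height (tail (rv d)) = height (tail d) - 1"
proof -
  have even_faces: "even (card (orb fs x))" if "x \<in> D" for x
  proof (cases "x \<in> outer")
    case True
    then have "orb fs x = outer" using F.orb_eq_of_mem[OF d0_in] outer_eq by auto
    then show ?thesis using even_blen blen_def by simp
  qed (use card_inner_face that in simp)
  then obtain side :: "'v \<Rightarrow> bool" where side: "\<And>d. d \<in> D \<Longrightarrow> side (tail (rv d)) \<longleftrightarrow> \<not> side (tail d)"
    using bipartition_of_even_faces[OF even_faces] by blast
  have "tail d \<in> verts D tail" "tail (rv d) \<in> verts D tail" using d rv_in unfolding verts_def by auto
  then have "odd (height (tail (rv d)) - height (tail d))"
    using height_parity[OF side] side[OF d] by auto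
  moreover have "height (tail (rv d)) \<le> height (tail d) + 1" by (rule height_edge[OF d])
  moreover have "height (tail d) \<le> height (tail (rv d)) + 1" using height_edge[OF rv_in[OF d]] rv_rv[OF d] by simp
  ultimately show ?thesis by presburger
qed

theorem coloring_extension: "\<exists>\<phi>. coloring D tail rv \<phi> \<and> (\<forall>v\<in>bverts tail rv sc d0. \<phi> v = \<psi> v)"
proof -
  define \<phi> where "\<phi> v = (\<psi> (bvtx 0) - 1 + height v) mod 3 + 1" for v
  have "coloring D tail rv \<phi>"
    unfolding coloring_def
  proof (intro conjI ballI)
    fix d assume "d \<in> D"
    then show "\<phi> (tail d) \<noteq> \<phi> (tail (rv d))" using height_step[of d] unfolding \<phi>_def by presburger
  qed (auto simp: \<phi>_def)
  moreover have "(3::int) dvd (p - p0 - x) \<Longrightarrow> p \<in> {1,2,3} \<Longrightarrow> (p0 - 1 + x) mod 3 + 1 = p" for p p0 x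
    by auto presburger+
  then have "\<phi> (bvtx n) = \<psi> (bvtx n)" for n
    using psi_cong_bheight[of n] psi_bvtx[of n] unfolding \<phi>_def height_bvtx by blast
  ultimately show ?thesis unfolding bverts_eq_range_bvtx by auto
qed

end

lemma quad_disk_if_disk_quadrangulation:
  assumes "disk_quadrangulation D tail rv sc d0"
  shows "quad_disk D tail rv sc d0"
proof -
  interpret spherical_map D tail rv sc
    using assms unfolding disk_quadrangulation_def by unfold_locales auto
  show ?thesis
    using assms unfolding disk_quadrangulation_def by unfold_locales (auto simp: outer_face_def)
qed

theorem lemma2p1:
  fixes D :: "'d set" and tail :: "'d \<Rightarrow> 'v" and rv sc :: "'d \<Rightarrow> 'd" and d0 :: 'd
    and \<psi> :: "'v \<Rightarrow> int"
  assumes "disk_quadrangulation D tail rv sc d0"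
    and "bcoloring tail rv sc d0 \<psi>"
    and "winding \<psi> (bwalk tail rv sc d0) = 0"
  shows "(\<exists>\<phi>. coloring D tail rv \<phi> \<and> (\<forall>v\<in>bverts tail rv sc d0. \<phi> v = \<psi> v)) \<longleftrightarrow>
         (\<forall>P Q. spoke D tail rv sc d0 P \<and> base tail rv sc d0 P Q \<longrightarrow>
                 int (length P) \<ge> \<bar>delta \<psi> Q\<bar>)"
proof
  interpret quad_disk D tail rv sc d0 using quad_disk_if_disk_quadrangulation[OF assms(1)] .
  show "\<forall>P Q. spoke D tail rv sc d0 P \<and> base tail rv sc d0 P Q \<longrightarrow> int (length P) \<ge> \<bar>delta \<psi> Q\<bar>"
    if "\<exists>\<phi>. coloring D tail rv \<phi> \<and> (\<forall>v\<in>bverts tail rv sc d0. \<phi> v = \<psi> v)"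
    using that spoke_bound_of_extension[OF _ _ assms(3)] by blast
  show "\<exists>\<phi>. coloring D tail rv \<phi> \<and> (\<forall>v\<in>bverts tail rv sc d0. \<phi> v = \<psi> v)"
    if "\<forall>P Q. spoke D tail rv sc d0 P \<and> base tail rv sc d0 P Q \<longrightarrow> int (length P) \<ge> \<bar>delta \<psi> Q\<bar>"
  proof -
    interpret spoke_condition D tail rv sc d0 \<psi>
      using assms(2,3) that by unfold_locales auto
    show ?thesis by (rule coloring_extension)
  qed
qed

end
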